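(* Let $(\mathcal{F},\mathcal{F}_d,R)$ be a complementary justification frame. Then for every $x\in\mathcal{F}_d$ and all rules $x\gets A$ and $\sim x\gets B$ in $R$, we have $A\cap\sim B\neq\emptyset$.
   Context: A fact space is a set $\mathcal{F}$ containing $\mathcal{L}=\{\mathbf{t},\mathbf{f},\mathbf{u}\}$, equipped with an involution $\sim$ with $\sim\mathbf{t}=\mathbf{f}$, $\sim\mathbf{u}=\mathbf{u}$, $\sim x\ne x$ for $x\ne\mathbf{u}$; $\sim B=\{\sim b:b\in B\}$. A justification frame is $(\mathcal{F},\mathcal{F}_d,R)$ with defined facts $\mathcal{F}_d\subseteq\mathcal{F}$, $\sim\mathcal{F}_d=\mathcal{F}_d$, $\mathcal{L}\cap\mathcal{F}_d=\emptyset$, and rules $R\subseteq\mathcal{F}_d\times2^{\mathcal{F}}$ written $x\gets A$, such that each $x\in\mathcal{F}_d$ has a rule with nonempty body and no rule with empty body. Let $R(x)$ be the set of bodies of rules with head $x$. A selection function for $x$ is a map $S:R(x)\to\mathcal{F}$ with $S(A)\in A$ for all $A\in R(x)$; $\mathrm{im}(S)$ is its image. The frame is complementary if for every $x\in\mathcal{F}_d$: (1) for every selection function $S$ for $x$ there is $A\in R(\sim x)$ with $A\subseteq\sim\mathrm{im}(S)$; (2) for every $A\in R(x)$ there is a selection function $S$ for $\sim x$ with $\sim\mathrm{im}(S)\subseteq A$. *)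

theory Defs
  imports Main
begin

definition fact_space :: "'a set \<Rightarrow> 'a \<Rightarrow> 'a \<Rightarrow> 'a \<Rightarrow> ('a \<Rightarrow> 'a) \<Rightarrow> bool" where
  "fact_space F t f u neg \<longleftrightarrow>
     t \<in> F \<and> f \<in> F \<and> u \<in> F \<and> t \<noteq> f \<and> t \<noteq> u \<and> f \<noteq> u \<and>
     (\<forall>x\<in>F. neg x \<in> F) \<and> (\<forall>x\<in>F. neg (neg x) = x) \<and>
     neg t = f \<and> neg u = u \<and> (\<forall>x\<in>F. x \<noteq> u \<longrightarrow> neg x \<noteq> x)"

definition bodies :: "('a \<times> 'a set) set \<Rightarrow> 'a \<Rightarrow> 'a set set" where
  "bodies R x = {A. (x, A) \<in> R}"

definition justification_frame ::
  "'a set \<Rightarrow> 'a \<Rightarrow> 'a \<Rightarrow> 'a \<Rightarrow> ('a \<Rightarrow> 'a) \<Rightarrow> 'a set \<Rightarrow> ('a \<times> 'a set) set \<Rightarrow> bool" where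
  "justification_frame F t f u neg Fd R \<longleftrightarrow>
     fact_space F t f u neg \<and> Fd \<subseteq> F \<and> neg ` Fd = Fd \<and> {t, f, u} \<inter> Fd = {} \<and>
     R \<subseteq> Fd \<times> Pow F \<and>
     (\<forall>x\<in>Fd. (\<exists>A. (x, A) \<in> R \<and> A \<noteq> {}) \<and> (x, {}) \<notin> R)"

definition selection_fn :: "('a \<times> 'a set) set \<Rightarrow> 'a \<Rightarrow> ('a set \<Rightarrow> 'a) \<Rightarrow> bool" where
  "selection_fn R x S \<longleftrightarrow> (\<forall>A\<in>bodies R x. S A \<in> A)"

definition sel_image :: "('a \<times> 'a set) set \<Rightarrow> 'a \<Rightarrow> ('a set \<Rightarrow> 'a) \<Rightarrow> 'a set" where
  "sel_image R x S = S ` bodies R x"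

definition complementary ::
  "'a set \<Rightarrow> 'a \<Rightarrow> 'a \<Rightarrow> 'a \<Rightarrow> ('a \<Rightarrow> 'a) \<Rightarrow> 'a set \<Rightarrow> ('a \<times> 'a set) set \<Rightarrow> bool" where
  "complementary F t f u neg Fd R \<longleftrightarrow>
     justification_frame F t f u neg Fd R \<and>
     (\<forall>x\<in>Fd.
        (\<forall>S. selection_fn R x S \<longrightarrow>
              (\<exists>A\<in>bodies R (neg x). A \<subseteq> neg ` sel_image R x S)) \<and>
        (\<forall>A\<in>bodies R x. \<exists>S. selection_fn R (neg x) S \<and>
              neg ` sel_image R (neg x) S \<subseteq> A))"

end

theory Submission
  imports Defs
begin

lemma selection_fn_image_meets_body:
  assumes "selection_fn R y S"
    and "neg ` sel_image R y S \<subseteq> A"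
    and "(y, B) \<in> R"
  shows "A \<inter> neg ` B \<noteq> {}"
proof -
  have B: "B \<in> bodies R y" using assms(3) by (simp add: bodies_def)
  then have "S B \<in> B" using assms(1) by (simp add: selection_fn_def)
  moreover have "neg (S B) \<in> A" using assms(2) B by (auto simp: sel_image_def)
  ultimately show ?thesis by blast
qed

lemma complementary_obtain_dual_selection:
  assumes "complementary F t f u neg Fd R"
    and "x \<in> Fd"
    and "(x, A) \<in> R"
  obtains S where "selection_fn R (neg x) S" and "neg ` sel_image R (neg x) S \<subseteq> A"
proof -
  have "\<forall>A\<in>bodies R x. \<exists>S. selection_fn R (neg x) S \<and> neg ` sel_image R (neg x) S \<subseteq> A"
    using assms(1,2) unfolding complementary_def by simp
  moreover have "A \<in> bodies R x" using assms(3) by (simp add: bodies_def)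
  ultimately show ?thesis using that by blast
qed

theorem mainTheorem6:
  assumes "complementary F t f u neg Fd R"
    and "x \<in> Fd"
    and "(x, A) \<in> R"
    and "(neg x, B) \<in> R"
  shows "A \<inter> neg ` B \<noteq> {}"
proof -
  obtain S where "selection_fn R (neg x) S" and "neg ` sel_image R (neg x) S \<subseteq> A"
    using complementary_obtain_dual_selection assms(1-3) .
  from this assms(4) show ?thesis by (rule selection_fn_image_meets_body)
qed

end
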